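(* In the setting of the joint threshold-based policy in which $D$ knows that $S$ uses this policy with threshold $P_S$, the per-slot success probability $\phi(P_S)=[1-p(P_{tx})]\,\Psi(P_S,P_D)$ is maximized over $P_S>P_{C,S}$ by the threshold $P_S^*>P_{C,S}$ satisfying $$\exp\Big[-\frac{(2^R-1)(1+\alpha)z}{P_S^*-P_{C,S}}\Big]=\frac{\lambda_S}{P_S^*}.$$
   Context: Parameters: rate $R>0$, noise $z>0$, $\alpha>0$, circuit power $P_{C,S}\ge0$, energy arrival means $\lambda_S,\lambda_D>0$, receive energy $P_D>0$. For threshold $P_S>P_{C,S}$, $P_{tx}=(P_S-P_{C,S})/(1+\alpha)$ and $p(P_{tx})=1-\exp(-(2^R-1)z/P_{tx})$. Under the joint threshold-based policy where $D$ knows $S$'s policy (both nodes act in a slot iff $B_S^t\ge P_S$, $B_D^t\ge P_D$ and the channel is not in outage; infinite batteries, stationary ergodic energy arrivals), the simultaneous activity probability is $\Psi(P_S,P_D)=\min\big(1,\frac{\lambda_S}{[1-p(P_{tx})]P_S},\frac{\lambda_D}{[1-p(P_{tx})]P_D}\big)$. *)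

theory Defs
  imports Complex_Main
begin

definition Ptx :: "real \<Rightarrow> real \<Rightarrow> real \<Rightarrow> real" where
  "Ptx alpha PCS PS = (PS - PCS) / (1 + alpha)"

definition pout :: "real \<Rightarrow> real \<Rightarrow> real \<Rightarrow> real" where
  "pout R z P = 1 - exp (- ((2 powr R - 1) * z / P))"

definition Psi :: "real \<Rightarrow> real \<Rightarrow> real \<Rightarrow> real \<Rightarrow> real \<Rightarrow> real \<Rightarrow> real \<Rightarrow> real \<Rightarrow> real" where
  "Psi R z alpha PCS lamS lamD PS PD =
     (let q = 1 - pout R z (Ptx alpha PCS PS)
      in min 1 (min (lamS / (q * PS)) (lamD / (q * PD))))"

definition phi :: "real \<Rightarrow> real \<Rightarrow> real \<Rightarrow> real \<Rightarrow> real \<Rightarrow> real \<Rightarrow> real \<Rightarrow> real \<Rightarrow> real" where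
  "phi R z alpha PCS lamS lamD PD PS =
     (1 - pout R z (Ptx alpha PCS PS)) * Psi R z alpha PCS lamS lamD PS PD"

end

theory Submission
  imports Defs
begin

text \<open>With \<open>c = (2^R - 1)(1 + \<alpha>) z\<close>, the success probability is
  \<open>\<phi>(P) = min (exp (-c/(P - PCS))) (min (lamS/P) (lamD/PD))\<close>. The first term
  increases and the second decreases in \<open>P\<close>, and the two cross by the intermediate value
  theorem; at any crossing point the minimum of the two is as large as it gets, and the
  constant term does not depend on \<open>P\<close>.\<close>

lemma phi_eq_min:
  assumes "PS > PCS" and "alpha > 0"
  shows "phi R z alpha PCS lamS lamD PD PS =
    min (exp (- ((2 powr R - 1) * (1 + alpha) * z / (PS - PCS)))) (min (lamS / PS) (lamD / PD))"
proof -
  let ?q = "exp (- ((2 powr R - 1) * (1 + alpha) * z / (PS - PCS)))"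
  have q: "1 - pout R z (Ptx alpha PCS PS) = ?q"
    unfolding pout_def Ptx_def using assms by (simp add: field_simps)
  have "?q * min 1 (min (lamS / (?q * PS)) (lamD / (?q * PD))) = min ?q (min (lamS / PS) (lamD / PD))"
    by (simp add: min_mult_distrib_left)
  then show ?thesis
    unfolding phi_def Psi_def Let_def q by simp
qed

lemma min_le_at_crossing:
  fixes g h :: "'a::linorder \<Rightarrow> 'b::linorder"
  assumes "mono_on S g" and "antimono_on S h"
    and "x \<in> S" and "x0 \<in> S" and "g x0 = h x0"
  shows "min (g x) (h x) \<le> h x0"
proof (cases "x \<le> x0")
  case True
  then have "g x \<le> g x0"
    using mono_onD[OF assms(1,3,4)] by simp
  with assms(5) show ?thesis by (simp add: min.coboundedI1)
next
  case False
  then have "h x \<le> h x0"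
    using monotone_onD[OF assms(2) assms(4,3)] by simp
  then show ?thesis by (simp add: min.coboundedI2)
qed

lemma exp_neg_divide_le:
  fixes c d :: real
  assumes "c > 0" and "d > 0"
  shows "exp (- (c / d)) \<le> d / c"
proof -
  have "c / d \<le> exp (c / d)"
    using exp_ge_add_one_self[of "c / d"] by linarith
  then show ?thesis
    using assms by (simp add: exp_minus field_simps)
qed

lemma exists_exp_crossing:
  fixes a c lam :: real
  assumes "a \<ge> 0" and "c > 0" and "lam > 0"
  shows "\<exists>P > a. exp (- (c / (P - a))) = lam / P"
proof -
  define f where "f P = exp (- (c / (P - a))) - lam / P" for P
  \<comment> \<open>Near \<open>a\<close> the bound \<open>exp (-t) \<le> 1/t\<close> puts the exponential below \<open>lam/P\<close>;
    far out the exponential exceeds \<open>1/2\<close> while \<open>lam/P\<close> is below it.\<close>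
  define d where "d = min 1 (c * lam / (a + 1))"
  define e where "e = 2 * c + 2 * lam + 1"
  have d: "0 < d" "d \<le> 1" "d \<le> c * lam / (a + 1)"
    using assms unfolding d_def by auto
  have e: "1 \<le> e"
    using assms unfolding e_def by simp
  have "exp (- (c / d)) \<le> d / c"
    using exp_neg_divide_le assms(2) d(1) .
  also have "\<dots> \<le> lam / (a + 1)"
    using d(3) assms(2) by (simp add: field_simps)
  also have "\<dots> \<le> lam / (a + d)"
    using d assms by (intro divide_left_mono) auto
  finally have "f (a + d) \<le> 0"
    unfolding f_def by simp
  moreover have "0 \<le> f (a + e)"
  proof -
    have "c / e < 1 / 2"
      using assms unfolding e_def by (simp add: field_simps)
    then have "1 / 2 < exp (- (c / e))"
      using exp_ge_add_one_self[of "- (c / e)"] by linarith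
    moreover have "lam / (a + e) < 1 / 2"
      using assms unfolding e_def by (simp add: field_simps)
    ultimately show ?thesis
      unfolding f_def by (simp only: add_diff_cancel_left')
  qed
  moreover have "a + d \<le> a + e"
    using d(2) e by simp
  moreover have "continuous_on {a + d..a + e} f"
    unfolding f_def using d(1) assms(1) by (intro continuous_intros) auto
  ultimately obtain P where "a + d \<le> P" "f P = 0"
    using IVT'[of f "a + d" 0 "a + e"] by blast
  then show ?thesis
    using d(1) unfolding f_def by (intro exI[of _ P]) auto
qed

theorem corollary4:
  fixes R z alpha PCS lamS lamD PD :: real
  assumes "R > 0" and "z > 0" and "alpha > 0" and "PCS \<ge> 0"
    and "lamS > 0" and "lamD > 0" and "PD > 0"
  shows "(\<exists>Pst. Pst > PCS \<and>
            exp (- ((2 powr R - 1) * (1 + alpha) * z / (Pst - PCS))) = lamS / Pst)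
       \<and> (\<forall>Pst. Pst > PCS \<and>
            exp (- ((2 powr R - 1) * (1 + alpha) * z / (Pst - PCS))) = lamS / Pst
          \<longrightarrow> (\<forall>PS. PS > PCS \<longrightarrow>
                 phi R z alpha PCS lamS lamD PD PS \<le> phi R z alpha PCS lamS lamD PD Pst))"
proof -
  define c where "c = (2 powr R - 1) * (1 + alpha) * z"
  define g where "g P = exp (- (c / (P - PCS)))" for P
  have "c > 0"
    using assms unfolding c_def by simp
  have g_mono: "mono_on {PCS<..} g"
    using \<open>c > 0\<close> unfolding g_def by (intro mono_onI) (simp add: divide_left_mono)
  have lam_antimono: "antimono_on {PCS<..} (\<lambda>P. lamS / P)"
    using assms by (intro monotone_onI) (simp add: divide_left_mono)
  have "phi R z alpha PCS lamS lamD PD PS \<le> phi R z alpha PCS lamS lamD PD Pst"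
    if "Pst > PCS" "g Pst = lamS / Pst" "PS > PCS" for Pst PS
  proof -
    have "min (g PS) (lamS / PS) \<le> lamS / Pst"
      using min_le_at_crossing[OF g_mono lam_antimono] that by simp
    then have "min (min (g PS) (lamS / PS)) (lamD / PD) \<le> min (g Pst) (min (lamS / Pst) (lamD / PD))"
      using that(2) by (simp add: min.coboundedI1)
    then show ?thesis
      using that assms(3) by (simp add: phi_eq_min min.assoc g_def c_def)
  qed
  moreover have "\<exists>Pst > PCS. g Pst = lamS / Pst"
    using exists_exp_crossing[OF assms(4) \<open>c > 0\<close> assms(5)] unfolding g_def .
  ultimately show ?thesis
    unfolding g_def c_def by blast
qed

end
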